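(* There is a constant $c$ such that the following holds. Let $n\in\mathbb N$, $f:\mathbb B^n\to\mathbb B$, and let $X\in\mathrm{IS}_{br}$ compute $f$. Then there exists $Y\in\mathrm{IS}_{br}$ in which the basic instruction $\mathrm{out}.\mathrm{set}{:}F$ does not occur (in any plain, positive test or negative test instruction) such that $Y$ computes $f$ and $|Y|\le c\cdot|X|$.
   Context: $\mathbb B=\{T,F\}$. A primitive instruction is one of: a plain basic instruction $a$, a positive test instruction $+a$, a negative test instruction $-a$ (for a basic instruction $a$), a forward jump instruction $\#l$ ($l\in\mathbb N$), or the termination instruction $!$. An instruction sequence is a finite nonempty sequence $X=u_1;\dots;u_k$ of primitive instructions; its length is $|X|=k$. Basic instructions have the form $f.m$ where the focus $f$ is one of $\mathrm{in}{:}i$, $\mathrm{aux}{:}i$ ($i\ge 1$) or $\mathrm{out}$, each naming a Boolean register, and the method $m$ is one of $\mathrm{set}{:}T$, $\mathrm{set}{:}F$, $\mathrm{get}$. Executing $f.\mathrm{set}{:}b$ sets register $f$ to $b$ and yields reply $b$; executing $f.\mathrm{get}$ leaves the register unchanged and yields its content as reply. Execution of $X=u_1;\dots;u_k$: a counter starts at $1$. If the counter exceeds $k$, execution deadlocks. At position $i$: if $u_i=!$, execution terminates; if $u_i=\#l$, execution deadlocks if $l=0$ and otherwise the counter becomes $i+l$; if $u_i$ is $a$, $+a$ or $-a$, the basic instruction $a$ is executed yielding reply $r$, and the counter becomes $i+1$ for $u_i=a$; for $u_i=+a$ it becomes $i+1$ if $r=T$ and $i+2$ if $r=F$; for $u_i=-a$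 it becomes $i+1$ if $r=F$ and $i+2$ if $r=T$. $\mathrm{IS}_{br}$ is the set of instruction sequences in which every basic instruction occurring belongs to $\{f.\mathrm{get}: f=\mathrm{in}{:}i \text{ or } f=\mathrm{aux}{:}i\}\cup\{f.\mathrm{set}{:}b: f=\mathrm{aux}{:}i \text{ or } f=\mathrm{out},\ b\in\mathbb B\}$. $X\in\mathrm{IS}_{br}$ computes $f:\mathbb B^n\to\mathbb B$ if for every $(b_1,\dots,b_n)\in\mathbb B^n$: when $X$ is executed with register $\mathrm{in}{:}j$ initialised to $b_j$ ($j\le n$) and all registers $\mathrm{aux}{:}i$ and $\mathrm{out}$ initialised to $F$, execution terminates (does not deadlock) without ever executing a basic instruction with focus $\mathrm{in}{:}j$ for $j>n$, and at termination register $\mathrm{out}$ contains $f(b_1,\dots,b_n)$. *)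

theory Defs
  imports Main
begin

datatype focus = In nat | Aux nat | Out

datatype meth = SetM bool | Get

datatype basic = BI focus meth

datatype prim = Plain basic | Pos basic | Neg basic | Jump nat | Term

type_synonym state = "focus \<Rightarrow> bool"

fun bfocus :: "basic \<Rightarrow> focus" where
  "bfocus (BI f m) = f"

fun do_basic :: "basic \<Rightarrow> state \<Rightarrow> state \<times> bool" where
  "do_basic (BI f (SetM b)) s = (s(f := b), b)"
| "do_basic (BI f Get) s = (s, s f)"

text \<open>Execution of the instruction sequence X from position i (1-based) in state s.
  Result: the set of foci of all basic instructions executed, and
  Some final state on termination, None on deadlock.\<close>
function exec :: "prim list \<Rightarrow> nat \<Rightarrow> state \<Rightarrow> focus set \<times> state option" where
  "exec X i s =
    (if i = 0 \<or> length X < i then ({}, None) else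
     (case X ! (i - 1) of
        Term \<Rightarrow> ({}, Some s)
      | Jump l \<Rightarrow> (if l = 0 then ({}, None) else exec X (i + l) s)
      | Plain a \<Rightarrow>
          (let (s', r) = do_basic a s; (Fs, res) = exec X (i + 1) s'
           in (insert (bfocus a) Fs, res))
      | Pos a \<Rightarrow>
          (let (s', r) = do_basic a s; (Fs, res) = exec X (if r then i + 1 else i + 2) s'
           in (insert (bfocus a) Fs, res))
      | Neg a \<Rightarrow>
          (let (s', r) = do_basic a s; (Fs, res) = exec X (if r then i + 2 else i + 1) s'
           in (insert (bfocus a) Fs, res))))"
  by pat_completeness auto
termination
  by (relation "measure (\<lambda>(X, i, s). Suc (length X) - i)") auto

fun basic_of :: "prim \<Rightarrow> basic option" where
  "basic_of (Plain a) = Some a"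
| "basic_of (Pos a) = Some a"
| "basic_of (Neg a) = Some a"
| "basic_of _ = None"

text \<open>Allowed basic instructions of IS_br (register indices start at 1).\<close>
fun br_basic :: "basic \<Rightarrow> bool" where
  "br_basic (BI (In i) Get) = (i \<ge> 1)"
| "br_basic (BI (Aux i) Get) = (i \<ge> 1)"
| "br_basic (BI (Aux i) (SetM b)) = (i \<ge> 1)"
| "br_basic (BI Out (SetM b)) = True"
| "br_basic _ = False"

definition IS_br :: "prim list \<Rightarrow> bool" where
  "IS_br X \<longleftrightarrow> X \<noteq> [] \<and> (\<forall>u \<in> set X. \<forall>a. basic_of u = Some a \<longrightarrow> br_basic a)"

text \<open>Initial state for input bs = (b_1,...,b_n): in:j holds b_j for 1 \<le> j \<le> n,
  all other registers F (in:j for j>n are never accessed anyway).\<close>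
definition init :: "bool list \<Rightarrow> state" where
  "init bs = (\<lambda>f. case f of In j \<Rightarrow> (1 \<le> j \<and> j \<le> length bs \<and> bs ! (j - 1)) | _ \<Rightarrow> False)"

definition computes :: "prim list \<Rightarrow> nat \<Rightarrow> (bool list \<Rightarrow> bool) \<Rightarrow> bool" where
  "computes X n f \<longleftrightarrow>
     (\<forall>bs. length bs = n \<longrightarrow>
        (case exec X 1 (init bs) of (Fs, res) \<Rightarrow>
           res \<noteq> None \<and> (\<forall>j. In j \<in> Fs \<longrightarrow> j \<le> n) \<and> the res Out = f bs))"

end

theory Submission
  imports Defs
begin

(* Given X computing f, build Y = compile X by relocating registers and
   replacing termination by a jump into a three-instruction epilogue:
     out is renamed to aux:1 and aux:i to aux:(i+2), inputs stay where they are;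
     every ! of X becomes a forward jump to the epilogue  +aux:1.get ; out.set:T ; ! .
   During the body of Y the register out is never touched, so it still holds F when the
   epilogue starts; the epilogue copies aux:1 (the relocated out) to out using only
   out.set:T.  Hence out.set:F never occurs in Y, and |Y| = |X| + 3 <= 4 |X|. *)

declare exec.simps[simp del]

text \<open>Registers of X are mapped injectively to registers of Y other than out.  The shift
  by two keeps even the (unused) register aux:0 apart from aux:1, the new home of out.\<close>
fun reloc :: "focus \<Rightarrow> focus" where
  "reloc (In j) = In j"
| "reloc (Aux i) = Aux (Suc (Suc i))"
| "reloc Out = Aux 1"

lemma reloc_inj: "reloc f = reloc g \<longleftrightarrow> f = g"
  by (cases f; cases g) simp_all

lemma reloc_not_Out: "reloc f \<noteq> Out"
  by (cases f) simp_all

lemma reloc_eq_In: "reloc f = In j \<longleftrightarrow> f = In j"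
  by (cases f) simp_all

fun reloc_basic :: "basic \<Rightarrow> basic" where
  "reloc_basic (BI f m) = BI (reloc f) m"

lemma bfocus_reloc_basic: "bfocus (reloc_basic a) = reloc (bfocus a)"
  by (cases a) simp

lemma br_basic_reloc: "br_basic a \<Longrightarrow> br_basic (reloc_basic a)"
  by (cases a rule: br_basic.cases) simp_all

lemma reloc_basic_not_out_set: "reloc_basic a \<noteq> BI Out (SetM b)"
  by (cases a) (simp add: reloc_not_Out)

definition tracks :: "state \<Rightarrow> state \<Rightarrow> bool" where
  "tracks s s' \<longleftrightarrow> (\<forall>f. s' (reloc f) = s f) \<and> s' Out = False"

lemma tracks_init: "tracks (init bs) (init bs)"
proof -
  have "init bs (reloc f) = init bs f" for f
    by (cases f) (simp_all add: init_def)
  then show ?thesis by (simp add: tracks_def init_def)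
qed

lemma do_basic_reloc:
  assumes "tracks s s'" and "do_basic a s = (s1, r)"
  shows "\<exists>s1'. do_basic (reloc_basic a) s' = (s1', r) \<and> tracks s1 s1'"
proof (cases a)
  case (BI f m)
  show ?thesis
  proof (cases m)
    case (SetM b)
    then have "s1 = s(f := b)" "r = b" using assms(2) BI by auto
    moreover have "tracks (s(f := b)) (s'(reloc f := b))"
      using assms(1) reloc_not_Out[of f] by (auto simp: tracks_def reloc_inj)
    ultimately show ?thesis using BI SetM by simp
  next
    case Get
    then show ?thesis using assms BI by (auto simp: tracks_def)
  qed
qed

fun succ_offset :: "prim \<Rightarrow> bool \<Rightarrow> nat" where
  "succ_offset (Pos a) r = (if r then 1 else 2)"
| "succ_offset (Neg a) r = (if r then 2 else 1)"
| "succ_offset u r = 1"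

lemma succ_offset_pos: "0 < succ_offset u r"
  by (cases u) simp_all

lemma exec_outside: "\<not> (1 \<le> i \<and> i \<le> length X) \<Longrightarrow> exec X i s = ({}, None)"
  by (subst exec.simps) auto

lemma exec_Term: "1 \<le> i \<Longrightarrow> i \<le> length X \<Longrightarrow> X ! (i - 1) = Term \<Longrightarrow>
    exec X i s = ({}, Some s)"
  by (subst exec.simps) simp

lemma exec_Jump: "1 \<le> i \<Longrightarrow> i \<le> length X \<Longrightarrow> X ! (i - 1) = Jump l \<Longrightarrow>
    exec X i s = (if l = 0 then ({}, None) else exec X (i + l) s)"
  by (subst exec.simps) simp

lemma exec_basic:
  assumes "1 \<le> i" "i \<le> length X" "basic_of (X ! (i - 1)) = Some a"
  shows "exec X i s =
           (let (s', r) = do_basic a s;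
                (Fs, res) = exec X (i + succ_offset (X ! (i - 1)) r) s'
            in (insert (bfocus a) Fs, res))"
  using assms
  by (subst exec.simps) (cases "X ! (i - 1)"; cases "do_basic a s"; simp add: add.commute)

text \<open>Translation of an instruction at distance d before the epilogue.\<close>
fun compile_prim :: "nat \<Rightarrow> prim \<Rightarrow> prim" where
  "compile_prim d (Plain a) = Plain (reloc_basic a)"
| "compile_prim d (Pos a) = Pos (reloc_basic a)"
| "compile_prim d (Neg a) = Neg (reloc_basic a)"
| "compile_prim d (Jump l) = Jump l"
| "compile_prim d Term = Jump d"

lemma basic_of_compile_prim: "basic_of (compile_prim d u) = map_option reloc_basic (basic_of u)"
  by (cases u) simp_all

lemma succ_offset_compile_prim: "succ_offset (compile_prim d u) r = succ_offset u r"
  by (cases u) simp_all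

text \<open>Copy the relocated out (aux:1) into out, using out.set:T only.\<close>
definition epilogue :: "prim list" where
  "epilogue = [Pos (BI (Aux 1) Get), Plain (BI Out (SetM True)), Term]"

definition compile :: "prim list \<Rightarrow> prim list" where
  "compile X = map (\<lambda>k. compile_prim (length X - k) (X ! k)) [0..<length X] @ epilogue"

lemma length_compile: "length (compile X) = length X + 3"
  by (simp add: compile_def epilogue_def)

lemma nth_compile:
  "1 \<le> i \<Longrightarrow> i \<le> length X \<Longrightarrow>
    compile X ! (i - 1) = compile_prim (Suc (length X) - i) (X ! (i - 1))"
  by (cases i) (simp_all add: compile_def nth_append)

lemma set_compile:
  "set (compile X) = (\<lambda>k. compile_prim (length X - k) (X ! k)) ` {0..<length X} \<union> set epilogue"
  by (simp add: compile_def)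

lemma exec_epilogue:
  assumes "tracks s s'"
  shows "\<exists>Fs' t'. exec (compile X) (Suc (length X)) s' = (Fs', Some t') \<and>
                  (\<forall>j. In j \<notin> Fs') \<and> t' Out = s Out"
proof -
  have aux1: "s' (Aux 1) = s Out" and out: "s' Out = False"
    using assms unfolding tracks_def by (metis reloc.simps(3))+
  have at: "compile X ! (length X + k) = epilogue ! k" if "k < 3" for k
    using that by (simp add: compile_def nth_append)
  have stop: "exec (compile X) (Suc (Suc (Suc (length X)))) st = ({}, Some st)" for st
    using exec_Term[of "length X + 3" "compile X"] at[of 2]
    by (simp add: length_compile epilogue_def numeral_eq_Suc)
  then have set_out:
    "exec (compile X) (Suc (Suc (length X))) st = ({Out}, Some (st(Out := True)))" for st
    using exec_basic[of "length X + 2" "compile X" "BI Out (SetM True)"] at[of 1]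
    by (simp add: length_compile epilogue_def numeral_eq_Suc)
  have "exec (compile X) (Suc (length X)) s' =
      (if s' (Aux 1) then ({Aux 1, Out}, Some (s'(Out := True))) else ({Aux 1}, Some s'))"
    using stop set_out exec_basic[of "Suc (length X)" "compile X" "BI (Aux 1) Get"] at[of 0]
    by (simp add: length_compile epilogue_def numeral_eq_Suc)
  then show ?thesis using aux1 out by auto
qed

lemma compile_simulates:
  "exec X i s = (Fs, Some t) \<Longrightarrow> tracks s s' \<Longrightarrow>
   \<exists>Fs' t'. exec (compile X) i s' = (Fs', Some t') \<and>
             (\<forall>j. In j \<in> Fs' \<longrightarrow> In j \<in> Fs) \<and> t' Out = t Out"
proof (induction "Suc (length X) - i" arbitrary: i s s' Fs t rule: less_induct)
  case less
  have i: "1 \<le> i" "i \<le> length X"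
    using less.prems(1) exec_outside[of i X s] by fastforce+
  have progress: "Suc (length X) - (i + k) < Suc (length X) - i" if "0 < k" for k
    using i that by arith
  have nthY: "compile X ! (i - 1) = compile_prim (Suc (length X) - i) (X ! (i - 1))"
    using nth_compile[OF i] .
  have iY: "1 \<le> i" "i \<le> length (compile X)" using i by (simp_all add: length_compile)
  show ?case
  proof (cases "basic_of (X ! (i - 1))")
    case None
    then consider "X ! (i - 1) = Term" | l where "X ! (i - 1) = Jump l"
      by (cases "X ! (i - 1)") auto
    then show ?thesis
    proof cases
      case 1
      then have "t = s" using less.prems(1) exec_Term[OF i] by simp
      moreover have "exec (compile X) i s' = exec (compile X) (Suc (length X)) s'"
        using exec_Jump[OF iY] nthY 1 i by simp
      ultimately show ?thesis using exec_epilogue[OF less.prems(2), of X] by auto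
    next
      case (2 l)
      then have "l \<noteq> 0" and run: "exec X (i + l) s = (Fs, Some t)"
        using less.prems(1) exec_Jump[OF i] by (auto split: if_splits)
      moreover have "exec (compile X) i s' = exec (compile X) (i + l) s'"
        using exec_Jump[OF iY] nthY 2 \<open>l \<noteq> 0\<close> by simp
      ultimately show ?thesis using less.hyps[OF progress run less.prems(2)] by simp
    qed
  next
    case (Some a)
    obtain s1 r where step: "do_basic a s = (s1, r)" by fastforce
    define k where "k = succ_offset (X ! (i - 1)) r"
    obtain Fs1 where run: "exec X (i + k) s1 = (Fs1, Some t)" and Fs: "Fs = insert (bfocus a) Fs1"
      using less.prems(1) exec_basic[OF i Some, of s] step by (auto simp: k_def split: prod.splits)
    obtain s1' where step': "do_basic (reloc_basic a) s' = (s1', r)" "tracks s1 s1'"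
      using do_basic_reloc[OF less.prems(2) step] by blast
    obtain Fs1' t' where run': "exec (compile X) (i + k) s1' = (Fs1', Some t')"
        "\<forall>j. In j \<in> Fs1' \<longrightarrow> In j \<in> Fs1" "t' Out = t Out"
      using less.hyps[OF progress run step'(2)] by (auto simp: k_def succ_offset_pos)
    have "basic_of (compile X ! (i - 1)) = Some (reloc_basic a)"
      using nthY Some by (simp add: basic_of_compile_prim)
    then have "exec (compile X) i s' = (insert (reloc (bfocus a)) Fs1', Some t')"
      using exec_basic[OF iY, of "reloc_basic a" s'] step' run' nthY
      by (simp add: k_def succ_offset_compile_prim bfocus_reloc_basic)
    then show ?thesis using run' Fs by (force simp: reloc_eq_In dest: sym)
  qed
qed

lemma computes_compile:
  assumes "computes X n f"
  shows "computes (compile X) n f"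
  unfolding computes_def
proof (intro allI impI)
  fix bs :: "bool list"
  assume "length bs = n"
  then have spec: "case exec X 1 (init bs) of (Fs, res) \<Rightarrow>
      res \<noteq> None \<and> (\<forall>j. In j \<in> Fs \<longrightarrow> j \<le> n) \<and> the res Out = f bs"
    using assms unfolding computes_def by simp
  obtain Fs res where "exec X 1 (init bs) = (Fs, res)" by fastforce
  with spec obtain t where run: "exec X 1 (init bs) = (Fs, Some t)"
    and inputs: "\<forall>j. In j \<in> Fs \<longrightarrow> j \<le> n" and out: "t Out = f bs"
    by auto
  from compile_simulates[OF run tracks_init] inputs out
  show "case exec (compile X) 1 (init bs) of (Fs, res) \<Rightarrow>
          res \<noteq> None \<and> (\<forall>j. In j \<in> Fs \<longrightarrow> j \<le> n) \<and> the res Out = f bs"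
    by auto
qed

lemma basic_of_compile:
  assumes "u \<in> set (compile X)" and "basic_of u = Some b"
  shows "(\<exists>u0 \<in> set X. \<exists>a. basic_of u0 = Some a \<and> b = reloc_basic a)
         \<or> b = BI (Aux 1) Get \<or> b = BI Out (SetM True)"
proof (cases "u \<in> set epilogue")
  case True
  then show ?thesis using assms(2) by (auto simp: epilogue_def)
next
  case False
  then obtain k where "k < length X" "u = compile_prim (length X - k) (X ! k)"
    using assms(1) by (auto simp: set_compile)
  then show ?thesis using assms(2) by (auto simp: basic_of_compile_prim)
qed

lemma IS_br_compile:
  assumes "IS_br X"
  shows "IS_br (compile X)"
  unfolding IS_br_def
proof (intro conjI ballI allI impI)
  show "compile X \<noteq> []" by (simp add: compile_def epilogue_def)
next
  fix u b
  assume "u \<in> set (compile X)" "basic_of u = Some b"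
  then consider u0 a where "u0 \<in> set X" "basic_of u0 = Some a" "b = reloc_basic a"
    | "b = BI (Aux 1) Get" | "b = BI Out (SetM True)"
    using basic_of_compile by blast
  then show "br_basic b"
  proof cases
    case 1
    then show ?thesis using assms br_basic_reloc unfolding IS_br_def by blast
  qed simp_all
qed

lemma compile_no_out_set_False:
  "\<forall>u \<in> set (compile X). basic_of u \<noteq> Some (BI Out (SetM False))"
proof (intro ballI notI)
  fix u
  assume "u \<in> set (compile X)" "basic_of u = Some (BI Out (SetM False))"
  then have "\<exists>a. BI Out (SetM False) = reloc_basic a"
    using basic_of_compile[of u X "BI Out (SetM False)"] by blast
  then show False
    using reloc_basic_not_out_set by (metis (full_types))
qed

text \<open>The constant 4 works: compile X has length |X| + 3 \<le> 4 |X| since X is nonempty.\<close>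
theorem theorem4:
  shows "\<exists>c::nat. \<forall>n (f :: bool list \<Rightarrow> bool) X.
           IS_br X \<and> computes X n f \<longrightarrow>
           (\<exists>Y. IS_br Y \<and>
                (\<forall>u \<in> set Y. basic_of u \<noteq> Some (BI Out (SetM False))) \<and>
                computes Y n f \<and> length Y \<le> c * length X)"
proof (intro exI[of _ 4] allI impI, elim conjE)
  fix n f X
  assume br: "IS_br X" and comp: "computes X n f"
  have "length (compile X) \<le> 4 * length X"
    using br by (cases X) (simp_all add: IS_br_def length_compile)
  then show "\<exists>Y. IS_br Y \<and> (\<forall>u \<in> set Y. basic_of u \<noteq> Some (BI Out (SetM False))) \<and>
                 computes Y n f \<and> length Y \<le> 4 * length X"
    using IS_br_compile[OF br] compile_no_out_set_False computes_compile[OF comp] by blast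
qed

end
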